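(* (i) For real $p\neq 0$, the inequality $\frac{1}{3}\left( \frac{\sin x}{x}\right) ^{4p}+\frac{2}{3}\left( \frac{\tan x}{x}\right) ^{p}>1$ holds for all $x\in(0,\pi/2)$ if and only if $p>0$ or $p\leq -\frac{\ln 3}{4(\ln \pi -\ln 2)}$. (ii) The reverse inequality $\frac{1}{3}\left( \frac{\sin x}{x}\right) ^{4p}+\frac{2}{3}\left( \frac{\tan x}{x}\right) ^{p}<1$ holds for all $x\in(0,\pi/2)$ if and only if $-2/5\leq p<0$. *)

theory Defs
  imports Complex_Main
begin

end

theory Submission
  imports Defs "HOL-Analysis.Complex_Transcendental"
begin

text \<open>Write \<open>G\<^sub>p(x)\<close> for the left-hand side. For fixed \<open>x\<close> the map \<open>p \<mapsto> G\<^sub>p(x)\<close> is convex with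
  \<open>G\<^sub>0(x) = 1\<close>, so \<open>G\<^sub>p > 1\<close> passes from an exponent to every exponent of the same sign and
  larger modulus, and \<open>G\<^sub>p < 1\<close> to every one of smaller modulus. It therefore suffices to show
  \<open>G\<^sub>p > 1\<close> for \<open>p > 0\<close> (weighted AM-GM and \<open>x\<^sup>3 cos x < sin\<^sup>3 x\<close>), \<open>G\<^sub>-\<^sub>2\<^sub>/\<^sub>5 < 1\<close>, and
  \<open>G\<^sub>-\<^sub>c > 1\<close> for \<open>c = ln 3 / (4 ln (\<pi>/2))\<close>; the last follows from \<open>G\<^sub>-\<^sub>1\<^sub>/\<^sub>2 > 1\<close> for
  \<open>x \<le> 13/10\<close> and from a direct estimate near \<open>\<pi>/2\<close>, where \<open>(\<pi>/2)\<^sup>4\<^sup>c = 3\<close>.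
  The exponents are sharp because of the endpoints: \<open>G\<^sub>p(x) \<rightarrow> (\<pi>/2)\<^sup>-\<^sup>4\<^sup>p / 3\<close> as \<open>x \<rightarrow> \<pi>/2\<close>,
  which is \<open>< 1\<close> for \<open>-c < p < 0\<close>, and \<open>G\<^sub>-\<^sub>q(x) = 1 + q (q - 2/5) x\<^sup>4 / 9 + O(x\<^sup>6)\<close> as
  \<open>x \<rightarrow> 0\<close>. Each pointwise estimate is reduced, through Taylor bounds for \<open>sin\<close> and \<open>cos\<close>,
  to the positivity of an integer polynomial on an interval, which is certified by interval
  Horner evaluation on a grid.\<close>

section \<open>Positivity certificates for integer polynomials\<close>

text \<open>Polynomials are integer coefficient lists, constant term first, so that the simplifier
  can multiply out the large polynomials of the certificates below.\<close>

fun ipoly :: "int list \<Rightarrow> real \<Rightarrow> real" where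
  "ipoly [] y = 0"
| "ipoly (c # cs) y = of_int c + y * ipoly cs y"

fun padd :: "int list \<Rightarrow> int list \<Rightarrow> int list" where
  "padd [] bs = bs"
| "padd as [] = as"
| "padd (a # as) (b # bs) = (a + b) # padd as bs"

definition psmult :: "int \<Rightarrow> int list \<Rightarrow> int list" where
  "psmult k as = map ((*) k) as"

fun pmult :: "int list \<Rightarrow> int list \<Rightarrow> int list" where
  "pmult [] bs = []"
| "pmult (a # as) bs = padd (psmult a bs) (0 # pmult as bs)"

fun ppower :: "int list \<Rightarrow> nat \<Rightarrow> int list" where
  "ppower p 0 = [1]"
| "ppower p (Suc n) = pmult p (ppower p n)"

definition psum :: "int list list \<Rightarrow> int list" where
  "psum ps = foldr padd ps []"

lemma ipoly_padd [simp]: "ipoly (padd as bs) y = ipoly as y + ipoly bs y"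
  by (induction as bs rule: padd.induct) (auto simp: algebra_simps)

lemma ipoly_psmult [simp]: "ipoly (psmult k as) y = of_int k * ipoly as y"
  by (induction as) (auto simp: psmult_def algebra_simps)

lemma ipoly_pmult [simp]: "ipoly (pmult as bs) y = ipoly as y * ipoly bs y"
  by (induction as) (auto simp: algebra_simps)

lemma ipoly_ppower [simp]: "ipoly (ppower p n) y = ipoly p y ^ n"
  by (induction n) auto

lemma ipoly_psum [simp]: "ipoly (psum ps) y = (\<Sum>p\<leftarrow>ps. ipoly p y)"
  by (induction ps) (auto simp: psum_def)

lemma ipoly_replicate_zero_append: "ipoly (replicate k 0 @ cs) y = y ^ k * ipoly cs y"
  by (induction k) auto

text \<open>Horner's scheme in interval arithmetic on \<open>[a/d, b/d]\<close>, \<open>0 \<le> a\<close>: the pair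
  \<open>horner_lower cs a b d\<close> is a fraction bounding \<open>ipoly cs\<close> from below there, because for a lower
  bound \<open>l\<close> and \<open>y \<ge> 0\<close> the product \<open>y l\<close> is at least \<open>a l / d\<close> or \<open>b l / d\<close>, according to the
  sign of \<open>l\<close>. The step is a separate constant so that the simplifier evaluates the recursive
  call only once.\<close>

definition horner_lower_step :: "int \<Rightarrow> int \<times> int \<Rightarrow> int \<Rightarrow> int \<Rightarrow> int \<Rightarrow> int \<times> int" where
  "horner_lower_step c lq a b d =
     (c * (snd lq * d) + (if 0 \<le> fst lq then a * fst lq else b * fst lq), snd lq * d)"

fun horner_lower :: "int list \<Rightarrow> int \<Rightarrow> int \<Rightarrow> int \<Rightarrow> int \<times> int" where
  "horner_lower [] a b d = (0, 1)"
| "horner_lower (c # cs) a b d = horner_lower_step c (horner_lower cs a b d) a b d"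

lemma horner_lower_step_le:
  fixes y v :: real
  assumes "0 \<le> a" "0 < d" "of_int a / of_int d \<le> y" "y \<le> of_int b / of_int d"
    and "0 < q" "of_int l / of_int q \<le> v"
  shows "of_int (if 0 \<le> l then a * l else b * l) / (of_int q * of_int d) \<le> y * v"
proof -
  have "0 \<le> of_int a / (of_int d :: real)"
    using assms(1,2) by simp
  with assms(3) have "0 \<le> y"
    by linarith
  have "of_int (if 0 \<le> l then a * l else b * l) / (of_int q * of_int d)
      = of_int (if 0 \<le> l then a else b) / of_int d * (of_int l / (of_int q :: real))"
    using assms(2,5) by (simp add: field_simps)
  also have "\<dots> \<le> y * (of_int l / of_int q)"
  proof (cases "0 \<le> l")
    case True
    then show ?thesis using assms(3,5) by (intro mult_right_mono) auto
  next
    case False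
    then show ?thesis using assms(4,5)
      by (intro mult_right_mono_neg) (auto simp: divide_nonpos_pos)
  qed
  also have "\<dots> \<le> y * v"
    using assms(6) \<open>0 \<le> y\<close> by (rule mult_left_mono)
  finally show ?thesis .
qed

lemma horner_lower_correct:
  assumes "0 \<le> a" "0 < d" "of_int a / of_int d \<le> y" "y \<le> of_int b / of_int d"
  shows "0 < snd (horner_lower cs a b d)
    \<and> of_int (fst (horner_lower cs a b d)) / of_int (snd (horner_lower cs a b d)) \<le> ipoly cs y"
proof (induction cs)
  case Nil
  then show ?case by simp
next
  case (Cons c cs)
  obtain l q where lq: "horner_lower cs a b d = (l, q)"
    by fastforce
  with Cons have "0 < q" "of_int l / of_int q \<le> ipoly cs y"
    by auto
  define m where "m = (if 0 \<le> l then a * l else b * l)"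
  have "of_int (c * (q * d) + m) / of_int (q * d) = (of_int c :: real) + of_int m / (of_int q * of_int d)"
    using \<open>0 < q\<close> assms(2) by (simp add: field_simps)
  also have "\<dots> \<le> ipoly (c # cs) y"
    using horner_lower_step_le[OF assms \<open>0 < q\<close> \<open>of_int l / of_int q \<le> ipoly cs y\<close>]
    by (simp add: m_def)
  finally have "of_int (c * (q * d) + m) / of_int (q * d) \<le> ipoly (c # cs) y" .
  moreover have "horner_lower (c # cs) a b d = (c * (q * d) + m, q * d)"
    using lq by (simp add: horner_lower_step_def m_def)
  ultimately show ?case
    using \<open>0 < q\<close> assms(2) by simp
qed

fun pos_on_grid :: "int list \<Rightarrow> int list \<Rightarrow> int \<Rightarrow> bool" where
  "pos_on_grid cs (a # b # bs) d =
     (a \<le> b \<and> 0 < fst (horner_lower cs a b d) \<and> (bs = [] \<or> pos_on_grid cs (b # bs) d))"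
| "pos_on_grid cs _ d = False"

lemma horner_lower_pos:
  assumes "0 \<le> a" "0 < d" "of_int a / of_int d \<le> y" "y \<le> of_int b / of_int d"
    and "0 < fst (horner_lower cs a b d)"
  shows "0 < ipoly cs y"
proof -
  have "0 < of_int (fst (horner_lower cs a b d)) / (of_int (snd (horner_lower cs a b d)) :: real)"
    using horner_lower_correct[OF assms(1-4), of cs] assms(5) by simp
  with horner_lower_correct[OF assms(1-4), of cs] show ?thesis
    by linarith
qed

lemma pos_on_grid_correct:
  "pos_on_grid cs bs d \<Longrightarrow> 0 < d \<Longrightarrow> 0 \<le> hd bs \<Longrightarrow> of_int (hd bs) / of_int d \<le> y
   \<Longrightarrow> y \<le> of_int (last bs) / of_int d \<Longrightarrow> 0 < ipoly cs y"
proof (induction cs bs d rule: pos_on_grid.induct)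
  case (1 cs a b bs d)
  show ?case
  proof (cases "bs = [] \<or> y \<le> of_int b / of_int d")
    case True
    then show ?thesis
      using "1.prems" by (intro horner_lower_pos[of a d y b]) auto
  next
    case False
    have "0 \<le> b" using "1.prems" by simp
    with False "1.prems" show ?thesis by (intro "1.IH") auto
  qed
qed auto

text \<open>The polynomials certified below vanish to some order \<open>k\<close> at \<open>0\<close>, where no interval lower
  bound can be positive; their \<open>k\<close> vanishing coefficients are dropped first.\<close>

lemma ipoly_pos_by_grid:
  assumes "take k cs = replicate k 0" "pos_on_grid (drop k cs) bs d" "0 < d" "0 \<le> hd bs"
    "of_int (hd bs) / of_int d \<le> y" "y \<le> of_int (last bs) / of_int d" "0 < y"
  shows "0 < ipoly cs y"
proof -
  have "cs = replicate k 0 @ drop k cs"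
    using assms(1) by (metis append_take_drop_id)
  then have "ipoly cs y = y ^ k * ipoly (drop k cs) y"
    by (metis ipoly_replicate_zero_append)
  moreover have "0 < ipoly (drop k cs) y"
    using pos_on_grid_correct[OF assms(2-6)] .
  ultimately show ?thesis using assms(7) by simp
qed

lemmas certificate_simps = psum_def psmult_def numeral_eq_Suc horner_lower_step_def

section \<open>Taylor bounds for sine, cosine and the exponential\<close>

lemma sin_lower_Taylor:
  fixes x :: real assumes "0 \<le> x" "x \<le> pi"
  shows "(\<Sum>m<4 * n. sin_coeff m * x ^ m) \<le> sin x"
proof (cases "x = 0 \<or> n = 0")
  case True
  then show ?thesis using assms by (auto simp: sin_coeff_def sin_ge_zero)
next
  case False
  then obtain t where t: "0 < t" "t < x"
    "sin x = (\<Sum>m<4 * n. sin_coeff m * x ^ m) + sin (t + 1/2 * real (4 * n) * pi) / fact (4 * n) * x ^ (4 * n)"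
    using Maclaurin_sin_expansion3[of "4 * n" x] assms by auto
  have "1/2 * real (4 * n) * pi = 2 * real n * pi"
    by simp
  then have "sin (t + 1/2 * real (4 * n) * pi) = sin t"
    by (simp only: sin_add cos_2npi sin_2npi)
  moreover have "0 \<le> sin t"
    using t assms by (intro sin_ge_zero) auto
  ultimately show ?thesis using t(3) assms by simp
qed

lemma sin_upper_Taylor:
  fixes x :: real assumes "0 \<le> x" "x \<le> pi"
  shows "sin x \<le> (\<Sum>m<4 * n + 2. sin_coeff m * x ^ m)"
proof (cases "x = 0")
  case True
  then show ?thesis by (simp add: sin_coeff_def)
next
  case False
  then obtain t where t: "0 < t" "t < x"
    "sin x = (\<Sum>m<4 * n + 2. sin_coeff m * x ^ m)
      + sin (t + 1/2 * real (4 * n + 2) * pi) / fact (4 * n + 2) * x ^ (4 * n + 2)"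
    using Maclaurin_sin_expansion3[of "4 * n + 2" x] assms by auto
  have "1/2 * real (4 * n + 2) * pi = pi + 2 * real n * pi"
    by (simp add: algebra_simps)
  then have "sin (t + 1/2 * real (4 * n + 2) * pi) = - sin t"
    by (simp only: add.assoc[symmetric] sin_add cos_2npi sin_2npi) simp
  moreover have "0 \<le> sin t"
    using t assms by (intro sin_ge_zero) auto
  ultimately show ?thesis using t(3) assms by simp
qed

lemma cos_lower_Taylor:
  fixes x :: real assumes "0 \<le> x" "x \<le> pi / 2"
  shows "(\<Sum>m<4 * n. cos_coeff m * x ^ m) \<le> cos x"
proof (cases "x = 0 \<or> n = 0")
  case True
  then show ?thesis using assms by (auto simp: cos_coeff_def cos_ge_zero)
next
  case False
  then obtain t where t: "0 < t" "t < x"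
    "cos x = (\<Sum>m<4 * n. cos_coeff m * x ^ m) + cos (t + 1/2 * real (4 * n) * pi) / fact (4 * n) * x ^ (4 * n)"
    using Maclaurin_cos_expansion2[of x "4 * n"] assms by auto
  have "1/2 * real (4 * n) * pi = 2 * real n * pi"
    by simp
  then have "cos (t + 1/2 * real (4 * n) * pi) = cos t"
    by (simp only: cos_add cos_2npi sin_2npi)
  moreover have "0 \<le> cos t"
    using t assms by (intro cos_ge_zero) auto
  ultimately show ?thesis using t(3) assms by simp
qed

lemma cos_upper_Taylor:
  fixes x :: real assumes "0 \<le> x" "x \<le> pi / 2"
  shows "cos x \<le> (\<Sum>m<4 * n + 2. cos_coeff m * x ^ m)"
proof (cases "x = 0")
  case True
  then show ?thesis by (simp add: cos_coeff_def)
next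
  case False
  then obtain t where t: "0 < t" "t < x"
    "cos x = (\<Sum>m<4 * n + 2. cos_coeff m * x ^ m)
      + cos (t + 1/2 * real (4 * n + 2) * pi) / fact (4 * n + 2) * x ^ (4 * n + 2)"
    using Maclaurin_cos_expansion2[of x "4 * n + 2"] assms by auto
  have "1/2 * real (4 * n + 2) * pi = pi + 2 * real n * pi"
    by (simp add: algebra_simps)
  then have "cos (t + 1/2 * real (4 * n + 2) * pi) = - cos t"
    by (simp only: add.assoc[symmetric] cos_add cos_2npi sin_2npi) simp
  moreover have "0 \<le> cos t"
    using t assms by (intro cos_ge_zero) auto
  ultimately show ?thesis using t(3) assms by simp
qed

lemma exp_minus_lower_cubic:
  fixes w :: real assumes "0 \<le> w"
  shows "1 - w + w^2/2 - w^3/6 \<le> exp (- w)"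
proof -
  obtain t where "exp (- w) = (\<Sum>m<4. (- w) ^ m / fact m) + exp t / fact 4 * (- w) ^ 4"
    using Maclaurin_exp_le[of "- w" 4] by blast
  moreover have "(\<Sum>m<4. (- w) ^ m / fact m) = 1 - w + w^2/2 - w^3/6"
    by (simp add: lessThan_nat_numeral fact_numeral eval_nat_numeral)
  ultimately show ?thesis by simp
qed

lemma sin_ge_cubic: "0 \<le> x \<Longrightarrow> x \<le> pi \<Longrightarrow> x - x^3/6 \<le> sin x"
  using sin_lower_Taylor[of x 1] by (simp add: sin_coeff_def lessThan_nat_numeral fact_numeral)

lemma sin_le_quintic: "0 \<le> x \<Longrightarrow> x \<le> pi \<Longrightarrow> sin x \<le> x - x^3/6 + x^5/120"
  using sin_upper_Taylor[of x 1] by (simp add: sin_coeff_def lessThan_nat_numeral fact_numeral)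

lemma cos_ge_quadratic: "0 \<le> x \<Longrightarrow> x \<le> pi / 2 \<Longrightarrow> 1 - x^2/2 \<le> cos x"
  using cos_lower_Taylor[of x 1] by (simp add: cos_coeff_def lessThan_nat_numeral fact_numeral)

lemma cos_le_quartic: "0 \<le> x \<Longrightarrow> x \<le> pi / 2 \<Longrightarrow> cos x \<le> 1 - x^2/2 + x^4/24"
  using cos_upper_Taylor[of x 1] by (simp add: cos_coeff_def lessThan_nat_numeral fact_numeral)

lemma cos_ge_sextic: "0 \<le> x \<Longrightarrow> x \<le> pi / 2 \<Longrightarrow> 1 - x^2/2 + x^4/24 - x^6/720 \<le> cos x"
  using cos_lower_Taylor[of x 2] by (simp add: cos_coeff_def lessThan_nat_numeral fact_numeral)

text \<open>Integer multiples of Taylor polynomials of \<open>sin x / x\<close> and \<open>cos x\<close>, as polynomials in \<open>x\<^sup>2\<close>.\<close>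

definition "sin7 = [5040, -840, 42, -1]"
definition "sin9 = [362880, -60480, 3024, -72, 1]"
definition "cos4 = [24, -12, 1]"
definition "cos6 = [720, -360, 30, -1]"
definition "cos8_defect = [0, 20160, -1680, 56, -1]"

lemma sin_ge_sin7:
  fixes x :: real assumes "0 \<le> x" "x \<le> pi"
  shows "x * ipoly sin7 (x^2) / 5040 \<le> sin x"
proof -
  have "x * ipoly sin7 (x^2) / 5040 = x - x^3/6 + x^5/120 - x^7/5040"
    by (simp add: sin7_def field_simps) (simp add: algebra_simps eval_nat_numeral)
  with sin_lower_Taylor[OF assms, of 2] show ?thesis
    by (simp add: sin_coeff_def lessThan_nat_numeral fact_numeral)
qed

lemma sin_le_sin9:
  fixes x :: real assumes "0 \<le> x" "x \<le> pi"
  shows "sin x \<le> x * ipoly sin9 (x^2) / 362880"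
proof -
  have "x * ipoly sin9 (x^2) / 362880 = x - x^3/6 + x^5/120 - x^7/5040 + x^9/362880"
    by (simp add: sin9_def field_simps) (simp add: algebra_simps eval_nat_numeral)
  with sin_upper_Taylor[OF assms, of 2] show ?thesis
    by (simp add: sin_coeff_def lessThan_nat_numeral fact_numeral)
qed

lemma cos_le_cos4:
  fixes x :: real assumes "0 \<le> x" "x \<le> pi / 2"
  shows "cos x \<le> ipoly cos4 (x^2) / 24"
proof -
  have "ipoly cos4 (x^2) / 24 = 1 - x^2/2 + x^4/24"
    by (simp add: cos4_def field_simps)
  with cos_le_quartic[OF assms] show ?thesis
    by simp
qed

lemma cos_ge_cos6:
  fixes x :: real assumes "0 \<le> x" "x \<le> pi / 2"
  shows "ipoly cos6 (x^2) / 720 \<le> cos x"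
proof -
  have "ipoly cos6 (x^2) / 720 = 1 - x^2/2 + x^4/24 - x^6/720"
    by (simp add: cos6_def field_simps)
  with cos_ge_sextic[OF assms] show ?thesis
    by simp
qed

lemma cos_le_cos8:
  fixes x :: real assumes "0 \<le> x" "x \<le> pi / 2"
  shows "cos x \<le> 1 - ipoly cos8_defect (x^2) / 40320"
proof -
  have "1 - ipoly cos8_defect (x^2) / 40320 = 1 - x^2/2 + x^4/24 - x^6/720 + x^8/40320"
    by (simp add: cos8_defect_def field_simps)
  with cos_upper_Taylor[OF assms, of 2] show ?thesis
    by (simp add: cos_coeff_def lessThan_nat_numeral fact_numeral)
qed

section \<open>Polynomial inequalities\<close>

definition gbinomial_taylor :: "real \<Rightarrow> nat \<Rightarrow> real \<Rightarrow> real" where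
  "gbinomial_taylor a n h = (\<Sum>k\<le>n. (a gchoose k) * h ^ k)"

lemma gbinomial_taylor_8_5_4: "gbinomial_taylor (8/5) 4 h = 1 + 8/5*h + 12/25*h^2 - 8/125*h^3 + 14/625*h^4"
  by (simp add: gbinomial_taylor_def gbinomial_prod_rev atMost_nat_numeral numeral_eq_Suc field_simps)

lemma gbinomial_taylor_2_5_3: "gbinomial_taylor (2/5) 3 h = 1 + 2/5*h - 3/25*h^2 + 8/125*h^3"
  by (simp add: gbinomial_taylor_def gbinomial_prod_rev atMost_nat_numeral numeral_eq_Suc field_simps)

lemma gbinomial_taylor_2_5_4: "gbinomial_taylor (2/5) 4 h = 1 + 2/5*h - 3/25*h^2 + 8/125*h^3 - 26/625*h^4"
  by (simp add: gbinomial_taylor_def gbinomial_prod_rev atMost_nat_numeral numeral_eq_Suc field_simps)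

lemma powr_le_of_power_less:
  fixes a u :: real
  assumes "0 < a" "odd n" "a ^ k < u ^ n"
  shows "a powr (real k / real n) \<le> u"
proof -
  have "0 < u ^ n"
    using assms(1,3) by (meson le_less_trans zero_le_power less_imp_le)
  then have "0 \<le> u"
    using assms(2) by (auto simp: zero_less_power_eq)
  have "(a powr (real k / real n)) ^ n = a ^ k"
    using assms(1,2) by (simp add: powr_power powr_realpow odd_pos)
  with assms(2,3) \<open>0 \<le> u\<close> show ?thesis
    by (metis power_le_imp_le_base less_imp_le odd_pos gr0_implies_Suc)
qed

lemma one_plus_powr_8_5_le:
  fixes h :: real assumes "0 \<le> h" "h \<le> 77/128"
  shows "(1 + h) powr (8/5) \<le> gbinomial_taylor (8/5) 4 h"
proof (cases "h = 0")
  case True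
  then show ?thesis by (simp add: gbinomial_taylor_8_5_4)
next
  case False
  define U where "U = [625, 1000, 300, -40, 14 :: int]"
  have U: "ipoly U h = 625 * gbinomial_taylor (8/5) 4 h"
    unfolding U_def gbinomial_taylor_8_5_4 by (simp add: algebra_simps eval_nat_numeral)
  have "0 < ipoly (psum [ppower U 5, psmult (- (625^5)) (ppower [1, 1] 8)]) h"
    by (rule ipoly_pos_by_grid[where k=5 and bs="[0, 77]" and d=128])
      (use assms False in \<open>simp_all add: U_def certificate_simps\<close>)
  then have "(1 + h) ^ 8 < gbinomial_taylor (8/5) 4 h ^ 5"
    by (simp add: U power_mult_distrib)
  then show ?thesis
    using powr_le_of_power_less[of "1 + h" 5 8] assms by simp
qed

lemma one_plus_powr_2_5_le:
  fixes h :: real assumes "0 \<le> h" "h \<le> 77/128"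
  shows "(1 + h) powr (2/5) \<le> gbinomial_taylor (2/5) 3 h"
proof (cases "h = 0")
  case True
  then show ?thesis by (simp add: gbinomial_taylor_2_5_3)
next
  case False
  define Z where "Z = [125, 50, -15, 8 :: int]"
  have Z: "ipoly Z h = 125 * gbinomial_taylor (2/5) 3 h"
    unfolding Z_def gbinomial_taylor_2_5_3 by (simp add: algebra_simps eval_nat_numeral)
  have "0 < ipoly (psum [ppower Z 5, psmult (- (125^5)) (ppower [1, 1] 2)]) h"
    by (rule ipoly_pos_by_grid[where k=4 and bs="[0, 77]" and d=128])
      (use assms False in \<open>simp_all add: Z_def certificate_simps\<close>)
  then have "(1 + h) ^ 2 < gbinomial_taylor (2/5) 3 h ^ 5"
    by (simp add: Z power_mult_distrib)
  then show ?thesis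
    using powr_le_of_power_less[of "1 + h" 5 2] assms by simp
qed

lemma one_minus_powr_2_5_le:
  fixes d :: real assumes "0 \<le> d" "d \<le> 1"
  shows "(1 - d) powr (2/5) \<le> gbinomial_taylor (2/5) 4 (- d)"
    and "0 < gbinomial_taylor (2/5) 4 (- d)"
proof -
  have "(1 - d) powr (2/5) \<le> gbinomial_taylor (2/5) 4 (- d) \<and> 0 < gbinomial_taylor (2/5) 4 (- d)"
  proof (cases "d = 0")
    case True
    then show ?thesis by (simp add: gbinomial_taylor_2_5_4)
  next
    case False
    define W where "W = [625, -250, -75, -40, -26 :: int]"
    have W: "ipoly W d = 625 * gbinomial_taylor (2/5) 4 (- d)"
      unfolding W_def gbinomial_taylor_2_5_4 by (simp add: algebra_simps eval_nat_numeral)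
    have "0 < ipoly (psum [ppower W 5, psmult (- (625^5)) (ppower [1, -1] 2)]) d"
      by (rule ipoly_pos_by_grid[where k=5 and bs="[0, 64, 96, 128]" and d=128])
        (use assms False in \<open>simp_all add: W_def certificate_simps\<close>)
    then have less: "(1 - d) ^ 2 < gbinomial_taylor (2/5) 4 (- d) ^ 5"
      by (simp add: W power_mult_distrib)
    then have "0 < gbinomial_taylor (2/5) 4 (- d) ^ 5"
      by (meson le_less_trans zero_le_power2)
    then have pos: "0 < gbinomial_taylor (2/5) 4 (- d)"
      by (simp add: zero_less_power_eq)
    moreover have "(1 - d) powr (2/5) \<le> gbinomial_taylor (2/5) 4 (- d)"
    proof (cases "d = 1")
      case True
      with pos show ?thesis by simp
    next
      case False
      with less show ?thesis
        using powr_le_of_power_less[of "1 - d" 5 2] assms by simp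
    qed
    ultimately show ?thesis by simp
  qed
  then show "(1 - d) powr (2/5) \<le> gbinomial_taylor (2/5) 4 (- d)"
    and "0 < gbinomial_taylor (2/5) 4 (- d)" by auto
qed

lemma sin7_gt_3150: "0 < Y \<Longrightarrow> Y \<le> 79/32 \<Longrightarrow> 3150 < ipoly sin7 Y"
proof -
  assume "0 < Y" "Y \<le> 79/32"
  then have "0 < ipoly (psum [sin7, [-3150]]) Y"
    by (intro ipoly_pos_by_grid[where k=0 and bs="[0, 158, 237, 276, 316]" and d=128])
      (simp_all add: sin7_def certificate_simps)
  then show ?thesis by simp
qed

lemma cos8_defect_pos: "0 < Y \<Longrightarrow> Y \<le> 79/32 \<Longrightarrow> 0 < ipoly cos8_defect Y"
  by (intro ipoly_pos_by_grid[where k=1 and bs="[0, 316]" and d=128])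
    (simp_all add: cos8_defect_def certificate_simps)

lemma cos4_less_sin7_cube: "0 < Y \<Longrightarrow> Y \<le> 79/32 \<Longrightarrow> 5040^3 * ipoly cos4 Y < 24 * ipoly sin7 Y ^ 3"
proof -
  assume "0 < Y" "Y \<le> 79/32"
  then have "0 < ipoly (psum [psmult 24 (ppower sin7 3), psmult (- (5040^3)) cos4]) Y"
    by (intro ipoly_pos_by_grid[where k=2 and bs="[0, 316]" and d=128])
      (simp_all add: sin7_def cos4_def certificate_simps)
  then show ?thesis by simp
qed

lemma neg_2_5_taylor_bound:
  fixes Y :: real
  assumes "0 < Y" "Y \<le> 79/32"
  defines "H \<equiv> 5040 / ipoly sin7 Y - 1" and "D \<equiv> ipoly cos8_defect Y / 40320"
  shows "gbinomial_taylor (8/5) 4 H / 3 + 2/3 * (gbinomial_taylor (2/5) 3 H * gbinomial_taylor (2/5) 4 (- D)) < 1"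
proof -
  define S where "S = ipoly sin7 Y"
  define M where "M = 5040 - S"
  define C :: real where "C = 625 * 40320^4"
  have S: "0 < S"
    using sin7_gt_3150[OF assms(1,2)] by (simp add: S_def)
  have H: "H = M / S"
    using S by (simp add: H_def S_def[symmetric] M_def field_simps)
  define E where "E = 625*S^4 + 1000*M*S^3 + 300*M^2*S^2 - 40*M^3*S + 14*M^4"
  define Z where "Z = 125*S^3 + 50*M*S^2 - 15*M^2*S + 8*M^3"
  define W where "W = C * gbinomial_taylor (2/5) 4 (- D)"
  have E: "gbinomial_taylor (8/5) 4 H = E / (625 * S^4)"
    using S unfolding H gbinomial_taylor_8_5_4 E_def
    by (simp add: field_simps power2_eq_square power3_eq_cube power4_eq_xxxx)
  have Z: "gbinomial_taylor (2/5) 3 H = Z / (125 * S^3)"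
    using S unfolding H gbinomial_taylor_2_5_3 Z_def
    by (simp add: field_simps power2_eq_square power3_eq_cube)
  define Mp where "Mp = psum [[5040], psmult (-1) sin7]"
  define Ep where "Ep = psum [psmult 625 (ppower sin7 4), psmult 1000 (pmult Mp (ppower sin7 3)),
    psmult 300 (pmult (ppower Mp 2) (ppower sin7 2)), psmult (-40) (pmult (ppower Mp 3) sin7),
    psmult 14 (ppower Mp 4)]"
  define Zp where "Zp = psum [psmult 125 (ppower sin7 3), psmult 50 (pmult Mp (ppower sin7 2)),
    psmult (-15) (pmult (ppower Mp 2) sin7), psmult 8 (ppower Mp 3)]"
  define Wp where "Wp = psum [[625 * 40320^4], psmult (-250 * 40320^3) cos8_defect,
    psmult (-75 * 40320^2) (ppower cos8_defect 2), psmult (-40 * 40320) (ppower cos8_defect 3),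
    psmult (-26) (ppower cos8_defect 4)]"
  have "ipoly Ep Y = E" "ipoly Zp Y = Z"
    by (simp_all add: Ep_def Zp_def Mp_def E_def Z_def S_def M_def)
  moreover have "ipoly Wp Y = W"
    unfolding W_def C_def gbinomial_taylor_2_5_4 D_def
    by (simp add: Wp_def field_simps power2_eq_square power3_eq_cube power4_eq_xxxx)
  moreover have "0 < ipoly (psum [psmult (625 * 40320^4) (psum [psmult 1875 (ppower sin7 4), psmult (-1) Ep]),
      psmult (-10) (pmult sin7 (pmult Zp Wp))]) Y"
    using assms(1,2)
    by (intro ipoly_pos_by_grid[where k=3 and bs="[0, 158, 197, 237, 256, 276, 286, 296, 306, 311, 316]" and d=128])
      (simp_all add: Ep_def Zp_def Wp_def Mp_def sin7_def cos8_defect_def certificate_simps)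
  ultimately have "10 * S * Z * W + C * E < 1875 * C * S^4"
    by (simp add: S_def C_def algebra_simps)
  moreover have "gbinomial_taylor (8/5) 4 H / 3 + 2/3 * (gbinomial_taylor (2/5) 3 H * gbinomial_taylor (2/5) 4 (- D))
      = (10 * S * Z * W + C * E) / (1875 * C * S^4)"
    using S unfolding E Z W_def by (simp add: C_def field_simps power2_eq_square power3_eq_cube power4_eq_xxxx)
  ultimately show ?thesis
    using S by (simp add: C_def divide_less_eq)
qed

lemma cos6_sin7_cube_bound:
  "0 < Y \<Longrightarrow> Y \<le> 217/128 \<Longrightarrow>
    720 * 5040^3 * (3 * ipoly sin9 Y ^ 2 - 362880^2)^2 < 4 * 362880^4 * (ipoly cos6 Y * ipoly sin7 Y ^ 3)"
proof -
  assume "0 < Y" "Y \<le> 217/128"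
  then have "0 < ipoly (psum [psmult (4 * 362880^4) (pmult cos6 (ppower sin7 3)),
      psmult (- 720 * 5040^3) (ppower (psum [psmult 3 (ppower sin9 2), [- (362880^2)]]) 2)]) Y"
    by (intro ipoly_pos_by_grid[where k=2 and bs="[0, 108, 162, 189, 217]" and d=128])
      (simp_all add: sin7_def sin9_def cos6_def certificate_simps)
  then show ?thesis by simp
qed

lemma near_pi_half_taylor_bound:
  fixes y :: real
  assumes "0 < y" "y \<le> 35/128"
  defines "sl \<equiv> y - y^3/6" and "cu \<equiv> 1 - y^2/2 + y^4/24" and "n \<equiv> 1 - 100 * y / 157"
  shows "2700 * (cu^2 + n * cu / 2 - 3/2 * n^2)^3 < 1352 * sl^2 * cu^4"
proof -
  define SL where "SL = [0, 6, 0, -1 :: int]"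
  define CU where "CU = [24, 0, -12, 0, 1 :: int]"
  define N where "N = [157, -100 :: int]"
  define I where "I = psum [psmult 49298 (ppower CU 2), psmult 3768 (pmult N CU), psmult (-1728) (ppower N 2)]"
  have SL: "ipoly SL y = 6 * sl" and CU: "ipoly CU y = 24 * cu" and N: "ipoly N y = 157 * n"
    by (simp_all add: SL_def sl_def CU_def cu_def N_def n_def algebra_simps eval_nat_numeral)
  define Q where "Q = cu^2 + n * cu / 2 - 3/2 * n^2"
  have I: "ipoly I y = (2 * 157^2 * 24^2) * Q"
    by (simp add: I_def CU N Q_def algebra_simps power2_eq_square)
  have "0 < ipoly (psum [psmult (8 * 169 * (2 * 157^2 * 24^2)^3) (pmult (ppower SL 2) (ppower CU 4)),
      psmult (- (27 * 100 * 36 * 24^4)) (ppower I 3)]) y"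
    using assms(1,2)
    by (intro ipoly_pos_by_grid[where k=2 and bs="[0, 8, 17, 21, 26, 28, 30, 32, 33, 35]" and d=128])
      (simp_all add: SL_def CU_def N_def I_def certificate_simps)
  then show ?thesis
    unfolding Q_def[symmetric] by (simp add: SL CU I power_mult_distrib)
qed

section \<open>The mean \<open>sin_tan_mean\<close>\<close>

definition sin_tan_mean :: "real \<Rightarrow> real \<Rightarrow> real" where
  "sin_tan_mean p x = (1/3) * (sin x / x) powr (4 * p) + (2/3) * (tan x / x) powr p"

lemma sin_tan_mean_neg:
  "sin_tan_mean (- q) x = (1/3) * (x / sin x) powr (4 * q) + (2/3) * (x * cos x / sin x) powr q"
  unfolding sin_tan_mean_def mult_minus_right powr_minus inverse_powr[symmetric]
  by (simp add: tan_def ac_simps)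

lemma power2_le_79_32: "0 < x \<Longrightarrow> x < pi / 2 \<Longrightarrow> x^2 \<le> 79/32"
proof -
  assume "0 < x" "x < pi / 2"
  moreover have "pi / 2 \<le> 1.5708"
    using pi_approx by simp
  ultimately have "x * x \<le> 1.5708 * 1.5708"
    by (intro mult_mono) auto
  then show ?thesis by (simp add: power2_eq_square)
qed

lemma x_cube_cos_less_sin_cube:
  fixes x :: real assumes "0 < x" "x < pi / 2"
  shows "x^3 * cos x < sin x ^ 3"
proof -
  define S where "S = ipoly sin7 (x^2)"
  have Y: "0 < x^2" "x^2 \<le> 79/32"
    using assms power2_le_79_32 by auto
  have "0 < S"
    using sin7_gt_3150[OF Y] by (simp add: S_def)
  have "x^3 * cos x \<le> x^3 * (ipoly cos4 (x^2) / 24)"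
    using cos_le_cos4[of x] assms by (intro mult_left_mono) auto
  also have "\<dots> < (x * S / 5040)^3"
    using cos4_less_sin7_cube[OF Y] assms by (simp add: S_def power_mult_distrib power_divide field_simps)
  also have "\<dots> \<le> sin x ^ 3"
    using sin_ge_sin7[of x] assms \<open>0 < S\<close> by (intro power_mono) (auto simp: S_def)
  finally show ?thesis .
qed

lemma x_cos_less_sin: "0 < x \<Longrightarrow> x < pi / 2 \<Longrightarrow> x * cos x < sin x"
proof -
  assume x: "0 < x" "x < pi / 2"
  then have "cos x ^ 3 \<le> cos x"
    using cos_gt_zero[of x] by (simp add: power_le_one power3_eq_cube mult_le_one)
  then have "(x * cos x)^3 \<le> x^3 * cos x"
    using x by (simp add: power_mult_distrib)
  also have "\<dots> < sin x ^ 3"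
    using x_cube_cos_less_sin_cube[OF x] .
  finally show ?thesis
    using sin_gt_zero2[OF x] by (simp add: power_less_imp_less_base)
qed

lemma powr_mult_exponent_le:
  fixes a t e :: real assumes "0 < a" "0 \<le> t" "t \<le> 1"
  shows "a powr (t * e) \<le> (1 - t) + t * a powr e"
proof -
  have "exp ((1 - t) * 0 + t * (e * ln a)) \<le> (1 - t) * exp 0 + t * exp (e * ln a)"
    using convex_onD[OF exp_convex, of t 0 "e * ln a"] assms by simp
  then show ?thesis using assms by (simp add: powr_def mult.assoc)
qed

lemma sin_tan_mean_mult_exponent_le:
  fixes x t p :: real assumes "0 < x" "x < pi / 2" "0 \<le> t" "t \<le> 1"
  shows "sin_tan_mean (t * p) x \<le> (1 - t) + t * sin_tan_mean p x"
proof -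
  have "0 < sin x / x" "0 < tan x / x"
    using assms sin_gt_zero2[of x] tan_gt_zero[of x] by auto
  then have "(sin x / x) powr (t * (4 * p)) \<le> (1 - t) + t * (sin x / x) powr (4 * p)"
    and "(tan x / x) powr (t * p) \<le> (1 - t) + t * (tan x / x) powr p"
    using assms(3,4) by (auto intro: powr_mult_exponent_le)
  then show ?thesis
    unfolding sin_tan_mean_def by (simp add: algebra_simps)
qed

lemma one_less_sin_tan_mean_scale:
  assumes "0 < x" "x < pi / 2" "0 < t" "t \<le> 1" "1 < sin_tan_mean (t * p) x"
  shows "1 < sin_tan_mean p x"
proof -
  have "t * 1 < t * sin_tan_mean p x"
    using sin_tan_mean_mult_exponent_le[of x t p] assms by linarith
  with \<open>0 < t\<close> show ?thesis
    by (simp only: mult_less_cancel_left_pos)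
qed

lemma sin_tan_mean_less_one_scale:
  assumes "0 < x" "x < pi / 2" "0 < t" "t \<le> 1" "sin_tan_mean p x < 1"
  shows "sin_tan_mean (t * p) x < 1"
proof -
  have "t * sin_tan_mean p x < t * 1"
    using assms(5,3) by (rule mult_strict_left_mono)
  with sin_tan_mean_mult_exponent_le[of x t p] assms(1-4) show ?thesis
    by linarith
qed

text \<open>For \<open>p > 0\<close>, the weighted AM-GM inequality reduces the claim to \<open>x\<^sup>3 cos x < sin\<^sup>3 x\<close>.\<close>

lemma one_less_sin_tan_mean_pos:
  fixes x p :: real assumes x: "0 < x" "x < pi / 2" and "0 < p"
  shows "1 < sin_tan_mean p x"
proof -
  have s: "0 < sin x" and c: "0 < cos x"
    using x sin_gt_zero2 cos_gt_zero by auto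
  define u where "u = 4 * p * ln (sin x / x)"
  define v where "v = p * ln (tan x / x)"
  have "(1/3) * u + (2/3) * v = (2 * p / 3) * ln (sin x ^ 3 / (x^3 * cos x))"
    using s c x by (simp add: u_def v_def tan_def ln_div ln_mult ln_realpow algebra_simps)
  also have "\<dots> > 0"
    using x_cube_cos_less_sin_cube[OF x] x c \<open>0 < p\<close> by (simp add: ln_gt_zero)
  finally have "1 < exp ((1 - 2/3) * u + (2/3) * v)"
    by simp
  also have "\<dots> \<le> (1 - 2/3) * exp u + (2/3) * exp v"
    using convex_onD[OF exp_convex, of "2/3" u v] by simp
  also have "\<dots> = sin_tan_mean p x"
    using s c x by (simp add: sin_tan_mean_def u_def v_def powr_def tan_def ac_simps)
  finally show ?thesis .
qed

lemma x_div_sin_le_sin7: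
  fixes x :: real assumes x: "0 < x" "x < pi / 2"
  defines "H \<equiv> 5040 / ipoly sin7 (x^2) - 1"
  shows "x / sin x \<le> 1 + H" and "0 \<le> H" and "H \<le> 77/128"
proof -
  define S where "S = ipoly sin7 (x^2)"
  have "3150 < S"
    using sin7_gt_3150 power2_le_79_32 x by (simp add: S_def)
  have sin_ge: "x * S / 5040 \<le> sin x"
    using sin_ge_sin7[of x] x by (simp add: S_def)
  have "x / sin x \<le> x / (x * S / 5040)"
    using sin_ge x sin_gt_zero2[of x] \<open>3150 < S\<close> by (intro divide_left_mono) auto
  then show "x / sin x \<le> 1 + H"
    using x by (simp add: H_def S_def)
  have "x * S \<le> x * 5040"
    using sin_ge sin_x_le_x[of x] x by linarith
  then show "0 \<le> H"
    using x \<open>3150 < S\<close> by (simp add: H_def S_def)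
  have "5040 / S \<le> 5040 / 3150"
    using \<open>3150 < S\<close> by (intro divide_left_mono) auto
  then show "H \<le> 77/128"
    by (simp add: H_def S_def)
qed

lemma sin_tan_mean_neg_2_5_less_one:
  fixes x :: real assumes x: "0 < x" "x < pi / 2"
  shows "sin_tan_mean (- (2/5)) x < 1"
proof -
  have Y: "0 < x^2" "x^2 \<le> 79/32"
    using x power2_le_79_32 by auto
  have s: "0 < sin x" and c: "0 < cos x"
    using x sin_gt_zero2 cos_gt_zero by auto
  define H where "H = 5040 / ipoly sin7 (x^2) - 1"
  define D where "D = ipoly cos8_defect (x^2) / 40320"
  have x_div_sin: "(x / sin x) powr (8/5) \<le> gbinomial_taylor (8/5) 4 H"
      "(x / sin x) powr (2/5) \<le> gbinomial_taylor (2/5) 3 H"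
    using x_div_sin_le_sin7[OF x] x s one_plus_powr_8_5_le one_plus_powr_2_5_le
    by (auto simp flip: H_def intro: order_trans[OF powr_mono2])
  have "cos x \<le> 1 - D" "0 \<le> D"
    using cos_le_cos8[of x] cos8_defect_pos[OF Y] x by (auto simp: D_def)
  then have cos: "cos x powr (2/5) \<le> gbinomial_taylor (2/5) 4 (- D)" "0 < gbinomial_taylor (2/5) 4 (- D)"
    using c one_minus_powr_2_5_le[of D] by (auto intro: order_trans[OF powr_mono2])
  have "sin_tan_mean (- (2/5)) x
      = (1/3) * (x / sin x) powr (8/5) + (2/3) * ((x / sin x) powr (2/5) * cos x powr (2/5))"
    using x s c by (simp add: sin_tan_mean_neg powr_mult[symmetric] ac_simps)
  also have "\<dots> \<le> (1/3) * gbinomial_taylor (8/5) 4 H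
      + (2/3) * (gbinomial_taylor (2/5) 3 H * gbinomial_taylor (2/5) 4 (- D))"
    using x_div_sin cos order_trans[OF powr_ge_zero x_div_sin(2)]
    by (intro add_mono mult_left_mono mult_mono) auto
  also have "\<dots> < 1"
    using neg_2_5_taylor_bound[OF Y] by (simp add: H_def D_def)
  finally show ?thesis .
qed

lemma sin_tan_mean_less_one_of_neg_2_5_le:
  assumes "-2/5 \<le> p" "p < 0" "0 < x" "x < pi / 2"
  shows "sin_tan_mean p x < 1"
  using sin_tan_mean_less_one_scale[of x "p / (- (2/5))" "- (2/5)"]
    sin_tan_mean_neg_2_5_less_one assms
  by (simp add: field_simps)

lemma cos6_pos: "0 < Y \<Longrightarrow> Y \<le> 2 \<Longrightarrow> 0 < ipoly cos6 Y"
proof -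
  assume "0 < Y" "Y \<le> 2"
  then have "Y^3 \<le> 2 * Y^2" "0 < Y^2"
    by (simp_all add: power3_eq_cube power2_eq_square mult_right_mono)
  moreover have "ipoly cos6 Y = 720 - 360 * Y + 30 * Y^2 - Y^3"
    by (simp add: cos6_def algebra_simps power2_eq_square power3_eq_cube)
  ultimately show ?thesis
    using \<open>Y \<le> 2\<close> by linarith
qed

lemma three_sin_sq_minus_sq_bound:
  fixes x :: real assumes x: "0 < x" "x \<le> 13/10" and "x^2 < 3 * sin x ^ 2"
  shows "(3 * sin x ^ 2 - x^2)^2 < 4 * x * cos x * sin x ^ 3"
proof -
  have "x < pi / 2" "x \<le> pi"
    using x pi_approx by auto
  have Y: "0 < x^2" "x^2 \<le> 217/128"
  proof -
    have "x * x \<le> 13/10 * (13/10)"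
      using x by (intro mult_mono) auto
    then show "x^2 \<le> 217/128" by (simp add: power2_eq_square)
  qed (use x in simp)
  define S where "S = ipoly sin7 (x^2)"
  define U where "U = ipoly sin9 (x^2)"
  define L where "L = ipoly cos6 (x^2)"
  have sin_ge: "x * S / 5040 \<le> sin x"
    using sin_ge_sin7[of x] x \<open>x \<le> pi\<close> by (simp add: S_def)
  have sin_le: "sin x \<le> x * U / 362880"
    using sin_le_sin9[of x] x \<open>x \<le> pi\<close> by (simp add: U_def)
  have cos_ge: "L / 720 \<le> cos x"
    using cos_ge_cos6[of x] x \<open>x < pi / 2\<close> by (simp add: L_def)
  have "0 < S"
    using sin7_gt_3150[of "x^2"] Y by (simp add: S_def)
  have "0 < L"
    using cos6_pos[of "x^2"] Y by (simp add: L_def)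
  have cert: "720 * 5040^3 * (3 * U^2 - 362880^2)^2 < 4 * 362880^4 * (L * S^3)"
    using cos6_sin7_cube_bound[OF Y] by (simp add: S_def U_def L_def)
  have "(3 * sin x ^ 2 - x^2)^2 \<le> (3 * (x * U / 362880)^2 - x^2)^2"
    using assms(3) sin_le sin_gt_zero2[of x] x \<open>x < pi / 2\<close>
    by (intro power_mono) (auto intro!: power_mono)
  also have "\<dots> = x^4 * ((3 * U^2 - 362880^2) / 362880^2)^2"
    by (simp add: field_simps power2_eq_square power4_eq_xxxx)
  also have "\<dots> < x^4 * (4 * (L / 720) * (S / 5040)^3)"
    using cert x by (simp add: power_divide field_simps)
  also have "\<dots> = 4 * x * (L / 720) * (x * S / 5040)^3"
    by (simp add: field_simps power4_eq_xxxx power3_eq_cube)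
  also have "\<dots> \<le> 4 * x * cos x * sin x ^ 3"
    using cos_ge sin_ge x \<open>0 < L\<close> \<open>0 < S\<close> by (intro mult_mono mult_left_mono power_mono) auto
  finally show ?thesis .
qed

lemma one_less_sin_tan_mean_neg_1_2:
  fixes x :: real assumes x: "0 < x" "x \<le> 13/10"
  shows "1 < sin_tan_mean (- (1/2)) x"
proof -
  have "x < pi / 2"
    using x pi_approx by simp
  then have s: "0 < sin x" and c: "0 < cos x"
    using x sin_gt_zero2 cos_gt_zero by auto
  define B where "B = x * cos x / sin x"
  have "0 < B"
    using x s c by (simp add: B_def)
  have mean: "sin_tan_mean (- (1/2)) x = (1/3) * (x / sin x)^2 + (2/3) * sqrt B"
    using x s \<open>0 < B\<close> by (simp add: sin_tan_mean_neg B_def powr_half_sqrt)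
  show ?thesis
  proof (cases "x^2 < 3 * sin x ^ 2")
    case False
    then have "3 \<le> (x / sin x)^2"
      using s by (simp add: power_divide field_simps)
    with real_sqrt_gt_zero[OF \<open>0 < B\<close>] show ?thesis
      unfolding mean by linarith
  next
    case True
    define R where "R = (3 * sin x ^ 2 - x^2) / (2 * sin x ^ 2)"
    have "0 < R"
      using True s by (simp add: R_def)
    have "R^2 = (3 * sin x ^ 2 - x^2)^2 / (4 * sin x ^ 4)"
      by (simp add: R_def power_divide field_simps power4_eq_xxxx power2_eq_square)
    also have "\<dots> < (4 * x * cos x * sin x ^ 3) / (4 * sin x ^ 4)"
      using three_sin_sq_minus_sq_bound[OF x True] s by (intro divide_strict_right_mono) auto
    also have "\<dots> = B"
      using s by (simp add: B_def field_simps power4_eq_xxxx power3_eq_cube)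
    finally have "R < sqrt B"
      using \<open>0 < R\<close> by (simp add: real_less_rsqrt)
    moreover have "1 - (1/3) * (x / sin x)^2 = (2/3) * R"
      using s by (simp add: R_def field_simps power_divide)
    ultimately show ?thesis
      unfolding mean by simp
  qed
qed

definition crit_exp :: real where
  "crit_exp = ln 3 / (4 * (ln pi - ln 2))"

lemma ln_pi_half_pos: "0 < ln pi - ln 2"
  using pi_gt3 by simp

lemma crit_exp_mult_ln_pi_half: "4 * crit_exp * (ln pi - ln 2) = ln 3"
proof -
  define L where "L = ln pi - ln 2"
  have "0 < L"
    using ln_pi_half_pos by (simp add: L_def)
  then show ?thesis
    unfolding crit_exp_def L_def[symmetric] by simp
qed

lemma crit_exp_bounds: "1/2 \<le> crit_exp" "crit_exp \<le> 5/8"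
proof -
  have L: "ln pi - ln 2 = ln (pi / 2)"
    using pi_gt3 by (simp add: ln_div)
  have "(pi / 2)^2 \<le> 3"
  proof -
    have "pi * pi \<le> 3.1415926535899 * 3.1415926535899"
      using pi_approx pi_gt3 by (intro mult_mono) auto
    then show ?thesis by (simp add: power2_eq_square)
  qed
  then have "2 * ln (pi / 2) \<le> ln 3"
    using pi_gt3 ln_le_cancel_iff[of "(pi/2)^2" 3] by (simp add: ln_realpow)
  then show "1/2 \<le> crit_exp"
    using ln_pi_half_pos by (simp add: crit_exp_def L field_simps)
  have "(3::real)^2 \<le> 1.57^5"
    by (simp add: eval_nat_numeral)
  also have "\<dots> \<le> (pi / 2)^5"
    using pi_approx by (intro power_mono) auto
  finally have "ln ((3::real)^2) \<le> ln ((pi / 2)^5)"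
    using pi_gt3 by (subst ln_le_cancel_iff) auto
  then have "real 2 * ln 3 \<le> real 5 * ln (pi / 2)"
    by (simp only: ln_realpow)
  then show "crit_exp \<le> 5/8"
    using ln_pi_half_pos by (simp add: crit_exp_def L field_simps)
qed

lemma pi_half_powr_crit_exp: "(pi / 2) powr (4 * crit_exp) = 3"
  using crit_exp_mult_ln_pi_half pi_gt3 by (simp add: powr_def ln_div)

lemma powr_ge_quadratic:
  fixes z r :: real assumes "0 < z" "z \<le> 1" "2 \<le> r" "r \<le> 5/2"
  shows "z^2 - z * (1 - z) / 2 \<le> z powr r"
proof -
  have "1 - 1/z \<le> ln z"
    using ln_le_minus_one[of "1/z"] assms(1) by (simp add: ln_div)
  then have "1 + (r - 2) * (1 - 1/z) \<le> 1 + (r - 2) * ln z"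
    using assms(3) by (intro add_left_mono mult_left_mono) auto
  also have "\<dots> \<le> exp ((r - 2) * ln z)"
    by (rule exp_ge_add_one_self)
  also have "\<dots> = z powr (r - 2)"
    using assms(1) by (simp add: powr_def)
  finally have a: "1 + (r - 2) * (1 - 1/z) \<le> z powr (r - 2)" .
  have "(r - 2) * (z * (1 - z)) \<le> (1/2) * (z * (1 - z))"
    using assms by (intro mult_right_mono) auto
  then have "z^2 - z * (1 - z) / 2 \<le> z^2 - (r - 2) * (z * (1 - z))"
    by simp
  also have "\<dots> = z^2 * (1 + (r - 2) * (1 - 1/z))"
    using assms(1) by (simp add: field_simps power2_eq_square)
  also have "\<dots> \<le> z^2 * z powr (r - 2)"
    using a by (intro mult_left_mono) auto
  also have "\<dots> = z powr 2 * z powr (r - 2)"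
    using assms(1) by simp
  also have "\<dots> = z powr r"
    by (simp add: powr_add[symmetric])
  finally show ?thesis .
qed

lemma near_pi_half_basics:
  fixes x :: real assumes "13/10 \<le> x" "x < pi / 2"
  defines "y \<equiv> pi / 2 - x"
  shows "0 < y" "y \<le> 35/128" "sin x = cos y" "cos x = sin y"
    and "cos y \<le> 1 - y^2/2 + y^4/24" "1 - y^2/2 \<le> cos y" "y - y^3/6 \<le> sin y"
proof -
  show "0 < y" "y \<le> 35/128"
    using assms pi_approx by (auto simp: y_def)
  then have "y \<le> pi / 2"
    using pi_gt3 by simp
  show "sin x = cos y"
    by (simp add: y_def cos_sin_eq)
  show "cos x = sin y"
    by (simp add: y_def sin_cos_eq)
  show "cos y \<le> 1 - y^2/2 + y^4/24" "1 - y^2/2 \<le> cos y" "y - y^3/6 \<le> sin y"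
    using cos_le_quartic cos_ge_quadratic sin_ge_cubic \<open>0 < y\<close> \<open>y \<le> pi / 2\<close> by auto
qed

lemma small_sin3_cos4_bounds:
  fixes y :: real assumes "0 < y" "y \<le> 1"
  shows "0 \<le> y - y^3/6" and "0 < 1 - y^2/2 + y^4/24" and "1 - y^2/2 + y^4/24 \<le> 1"
proof -
  have "y^2 \<le> 1"
    using assms by (simp add: power_le_one)
  have "y * y^2 \<le> y"
    using assms \<open>y^2 \<le> 1\<close> by (intro mult_left_le) auto
  then show "0 \<le> y - y^3/6"
    using assms by (simp add: power3_eq_cube power2_eq_square)
  have "y^2 * y^2 \<le> 12 * y^2"
    using \<open>y^2 \<le> 1\<close> by (intro mult_right_mono) auto
  then have "y^4 \<le> 12 * y^2"
    by (simp flip: power_add)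
  moreover have "0 \<le> y^4"
    by simp
  ultimately show "0 < 1 - y^2/2 + y^4/24" "1 - y^2/2 + y^4/24 \<le> 1"
    using \<open>y^2 \<le> 1\<close> by linarith+
qed

lemma near_pi_half_z_bounds:
  fixes x :: real assumes x: "13/10 \<le> x" "x < pi / 2"
  defines "y \<equiv> pi / 2 - x"
  shows "(1 - 100 * y / 157) / (1 - y^2/2 + y^4/24) \<le> 2 * x / (pi * sin x)"
    and "2 * x \<le> pi * sin x"
proof -
  note basics = near_pi_half_basics[OF x, folded y_def]
  have "cos y > 0"
    using basics(3) x sin_gt_zero2[of x] by simp
  have "1 - 100 * y / 157 \<le> 1 - 2 * y / pi"
  proof -
    have "2 * y / pi \<le> 2 * y / 3.14"
      using basics(1) pi_approx by (intro divide_left_mono) auto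
    then show ?thesis by simp
  qed
  also have "1 - 2 * y / pi = 2 * x / pi"
    using pi_gt3 by (simp add: y_def field_simps)
  finally have "1 - 100 * y / 157 \<le> 2 * x / pi" .
  moreover have "0 \<le> 1 - 100 * y / 157"
    using basics(2) by simp
  moreover have "0 \<le> 2 * x / pi"
    using x by simp
  ultimately have "(1 - 100 * y / 157) / (1 - y^2/2 + y^4/24) \<le> (2 * x / pi) / cos y"
    using basics(5) \<open>cos y > 0\<close> by (intro frac_le) auto
  then show "(1 - 100 * y / 157) / (1 - y^2/2 + y^4/24) \<le> 2 * x / (pi * sin x)"
    using basics(3) by simp
  have "pi * y \<le> 4 * 1"
    using basics(1,2) pi_less_4 by (intro mult_mono) auto
  then have "pi * y * y \<le> 4 * y"
    using basics(1) by (intro mult_right_mono) auto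
  moreover have "pi * (1 - y^2/2) - 2 * x = 2 * y - pi * y * y / 2"
    by (simp add: y_def field_simps power2_eq_square)
  ultimately have "2 * x \<le> pi * (1 - y^2/2)"
    by linarith
  also have "\<dots> \<le> pi * sin x"
    using basics(3,6) pi_gt3 by (intro mult_left_mono) auto
  finally show "2 * x \<le> pi * sin x" .
qed

lemma near_pi_half_cot_lower:
  fixes x :: real assumes x: "13/10 \<le> x" "x < pi / 2"
  defines "y \<equiv> pi / 2 - x"
  shows "13/10 * (y - y^3/6) / (1 - y^2/2 + y^4/24) \<le> x * cos x / sin x"
proof -
  note basics = near_pi_half_basics[OF x, folded y_def]
  have "cos y > 0" "sin y > 0"
    using basics(3,4) x sin_gt_zero2[of x] cos_gt_zero[of x] by auto
  have "13/10 * (y - y^3/6) \<le> x * sin y"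
    using x basics(1,2,7) small_sin3_cos4_bounds(1)[of y] by (intro mult_mono) auto
  then have "13/10 * (y - y^3/6) / (1 - y^2/2 + y^4/24) \<le> x * sin y / cos y"
    using basics(5) \<open>cos y > 0\<close> \<open>sin y > 0\<close> x by (intro frac_le) auto
  then show ?thesis
    using basics(3,4) by simp
qed

lemma less_two_thirds_powr_of_cube_less:
  fixes a b :: real assumes "0 < b" "a ^ 3 < (8/27) * b ^ 2"
  shows "a < (2/3) * b powr (2/3)"
proof -
  have "(b powr (2/3)) ^ 3 = b ^ 2"
    using assms(1) by (simp add: powr_power)
  then have "((2/3) * b powr (2/3)) ^ 3 = (8/27) * b ^ 2"
    unfolding power_mult_distrib by (simp add: eval_nat_numeral)
  with assms(2) show ?thesis
    by (intro power_less_imp_less_base[of a 3]) auto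
qed

lemma near_pi_half_quadratic_bound:
  fixes y B :: real
  assumes y: "0 < y" "y \<le> 35/128" and "0 < B" and B: "13/10 * (y - y^3/6) / (1 - y^2/2 + y^4/24) \<le> B"
  defines "w \<equiv> (1 - 100 * y / 157) / (1 - y^2/2 + y^4/24)"
  shows "1 + w / 2 - 3/2 * w^2 < (2/3) * B powr (2/3)"
proof (cases "1 + w / 2 - 3/2 * w^2 \<le> 0")
  case True
  moreover have "0 < B powr (2/3)"
    using \<open>0 < B\<close> by simp
  ultimately show ?thesis by linarith
next
  case False
  define sl where "sl = y - y^3/6"
  define cu where "cu = 1 - y^2/2 + y^4/24"
  define n where "n = 1 - 100 * y / 157"
  have "0 \<le> sl" "0 < cu"
    using small_sin3_cos4_bounds[of y] y by (simp_all add: sl_def cu_def)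
  have w: "w = n / cu"
    by (simp add: w_def n_def cu_def)
  have "1 + w / 2 - 3/2 * w^2 = (cu^2 + n * cu / 2 - 3/2 * n^2) / cu^2"
    unfolding w using \<open>0 < cu\<close> by (simp add: field_simps power2_eq_square)
  then have "(1 + w / 2 - 3/2 * w^2) ^ 3 = (cu^2 + n * cu / 2 - 3/2 * n^2)^3 / cu^6"
    by (simp add: power_divide flip: power_mult)
  also have "\<dots> < (1352 / 2700) * sl^2 * cu^4 / cu^6"
    using near_pi_half_taylor_bound[OF y] \<open>0 < cu\<close>
    by (intro divide_strict_right_mono) (auto simp: sl_def cu_def n_def)
  also have "\<dots> = (8/27) * (13/10 * sl / cu)^2"
    using \<open>0 < cu\<close> by (simp add: power_divide field_simps eval_nat_numeral)
  also have "\<dots> \<le> (8/27) * B^2"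
    using B \<open>0 \<le> sl\<close> \<open>0 < cu\<close> by (intro mult_left_mono power_mono) (auto simp: sl_def cu_def)
  finally show ?thesis
    using \<open>0 < B\<close> by (rule less_two_thirds_powr_of_cube_less[rotated])
qed

lemma near_pi_half_bound:
  fixes x :: real assumes x: "13/10 \<le> x" "x < pi / 2"
  defines "z \<equiv> 2 * x / (pi * sin x)" and "B \<equiv> x * cos x / sin x"
  shows "1 - (z^2 - z * (1 - z) / 2) < (2/3) * B powr (2/3)"
proof -
  define y where "y = pi / 2 - x"
  define w where "w = (1 - 100 * y / 157) / (1 - y^2/2 + y^4/24)"
  note basics = near_pi_half_basics[OF x, folded y_def]
  have "w \<le> z"
    using near_pi_half_z_bounds(1)[OF x] by (simp add: z_def w_def y_def)
  have "z \<le> 1"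
    using near_pi_half_z_bounds(2)[OF x] x sin_gt_zero2[of x] pi_gt3 by (simp add: z_def)
  have "0 < B"
    using x sin_gt_zero2[of x] cos_gt_zero[of x] by (simp add: B_def)
  have "4/5 \<le> w"
  proof -
    have "0 < 1 - y^2/2 + y^4/24" "1 - y^2/2 + y^4/24 \<le> 1"
      using small_sin3_cos4_bounds[of y] basics(1,2) by simp_all
    moreover have "4/5 \<le> 1 - 100 * y / 157"
      using basics(2) by simp
    ultimately show ?thesis
      unfolding w_def by (simp add: le_divide_eq)
  qed
  have "1 + z / 2 - 3/2 * z^2 \<le> 1 + w / 2 - 3/2 * w^2"
  proof -
    have "(1 + z / 2 - 3/2 * z^2) - (1 + w / 2 - 3/2 * w^2) = (z - w) * (1/2 - 3/2 * (z + w))"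
      by (simp add: field_simps power2_eq_square)
    also have "\<dots> \<le> 0"
      using \<open>w \<le> z\<close> \<open>4/5 \<le> w\<close> by (intro mult_nonneg_nonpos) auto
    finally show ?thesis by simp
  qed
  also have "\<dots> < (2/3) * B powr (2/3)"
    using near_pi_half_quadratic_bound[OF basics(1,2) \<open>0 < B\<close>] near_pi_half_cot_lower[OF x]
    by (simp add: w_def y_def B_def)
  finally show ?thesis
    by (simp add: field_simps power2_eq_square)
qed

text \<open>As \<open>(\<pi>/2)\<^sup>4\<^sup>c = 3\<close> for \<open>c = crit_exp\<close>, \<open>sin_tan_mean (-c) x = z\<^sup>4\<^sup>c + (2/3) B\<^sup>c\<close> with
  \<open>z = 2x / (\<pi> sin x)\<close> and \<open>B = x cot x\<close>, both in \<open>(0, 1]\<close>.\<close>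

lemma sin_tan_mean_neg_crit_exp_lower:
  fixes x :: real assumes x: "0 < x" "x < pi / 2" and "2 * x \<le> pi * sin x"
  defines "z \<equiv> 2 * x / (pi * sin x)" and "B \<equiv> x * cos x / sin x"
  shows "z^2 - z * (1 - z) / 2 + (2/3) * B powr (2/3) \<le> sin_tan_mean (- crit_exp) x"
proof -
  have s: "0 < sin x" and c: "0 < cos x"
    using x sin_gt_zero2 cos_gt_zero by auto
  have "0 < z" "z \<le> 1"
    using x s assms(3) pi_gt3 by (auto simp: z_def)
  have xz: "x / sin x = pi / 2 * z"
    using s pi_gt3 by (simp add: z_def)
  have "(x / sin x) powr (4 * crit_exp) = (pi / 2) powr (4 * crit_exp) * z powr (4 * crit_exp)"
    unfolding xz using \<open>0 < z\<close> pi_gt3 by (intro powr_mult)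
  then have "(x / sin x) powr (4 * crit_exp) = 3 * z powr (4 * crit_exp)"
    unfolding pi_half_powr_crit_exp .
  moreover have "z^2 - z * (1 - z) / 2 \<le> z powr (4 * crit_exp)"
    using \<open>0 < z\<close> \<open>z \<le> 1\<close> crit_exp_bounds by (intro powr_ge_quadratic) auto
  moreover have "B powr (2/3) \<le> B powr crit_exp"
    using x_cos_less_sin[OF x] x s c crit_exp_bounds by (intro powr_mono') (auto simp: B_def)
  ultimately show ?thesis
    by (simp add: sin_tan_mean_neg B_def)
qed

lemma one_less_sin_tan_mean_neg_crit_exp:
  fixes x :: real assumes x: "0 < x" "x < pi / 2"
  shows "1 < sin_tan_mean (- crit_exp) x"
proof (cases "x \<le> 13/10")
  case True
  have "- (1/2) = 1 / (2 * crit_exp) * (- crit_exp)" "0 < 1 / (2 * crit_exp)" "1 / (2 * crit_exp) \<le> 1"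
    using crit_exp_bounds by (auto simp: field_simps)
  then show ?thesis
    using one_less_sin_tan_mean_scale[OF x] one_less_sin_tan_mean_neg_1_2[OF x(1) True] by metis
next
  case False
  then have "13/10 \<le> x" by simp
  then have "2 * x \<le> pi * sin x"
    using near_pi_half_z_bounds(2) x(2) by blast
  with near_pi_half_bound[OF \<open>13/10 \<le> x\<close> x(2)] sin_tan_mean_neg_crit_exp_lower[OF x]
  show ?thesis by linarith
qed

lemma one_less_sin_tan_mean_of_le_neg_crit_exp:
  assumes "p \<le> - crit_exp" "0 < x" "x < pi / 2"
  shows "1 < sin_tan_mean p x"
proof -
  have "p < 0"
    using assms(1) crit_exp_bounds by simp
  then have "- crit_exp = (- crit_exp / p) * p" "0 < - crit_exp / p" "- crit_exp / p \<le> 1"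
    using assms(1) crit_exp_bounds by (auto simp: field_simps)
  then show ?thesis
    using one_less_sin_tan_mean_scale[OF assms(2,3)] one_less_sin_tan_mean_neg_crit_exp[OF assms(2,3)] by metis
qed

lemma sin_tan_mean_tendsto_pi_half:
  fixes p :: real assumes "p < 0"
  shows "(sin_tan_mean p \<longlongrightarrow> (1/3) * (2 / pi) powr (4 * p)) (at_left (pi / 2))"
proof -
  have "((\<lambda>x. sin x / x) \<longlongrightarrow> sin (pi / 2) / (pi / 2)) (at_left (pi / 2))"
    by (intro tendsto_intros) auto
  then have sin_part: "((\<lambda>x. (sin x / x) powr (4 * p)) \<longlongrightarrow> (2 / pi) powr (4 * p)) (at_left (pi / 2))"
    using tendsto_powr[OF _ tendsto_const, of "\<lambda>x. sin x / x" "2 / pi"] by simp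
  have "filterlim (\<lambda>x. tan x / x) at_top (at_left (pi / 2))"
  proof -
    have "((\<lambda>x. 1 / x) \<longlongrightarrow> 1 / (pi / 2)) (at_left (pi / 2))"
      by (intro tendsto_intros) auto
    from filterlim_tendsto_pos_mult_at_top[OF this _ filterlim_tan_at_left]
    show ?thesis by simp
  qed
  then have tan_part: "((\<lambda>x. (tan x / x) powr p) \<longlongrightarrow> 0) (at_left (pi / 2))"
    using tendsto_neg_powr[OF assms] by blast
  have "(sin_tan_mean p \<longlongrightarrow> (1/3) * (2 / pi) powr (4 * p) + (2/3) * 0) (at_left (pi / 2))"
    unfolding sin_tan_mean_def by (intro tendsto_add tendsto_mult tendsto_const sin_part tan_part)
  then show ?thesis by simp
qed

lemma sin_tan_mean_less_one_near_pi_half: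
  fixes p :: real assumes "- crit_exp < p" "p < 0"
  shows "\<exists>x. 0 < x \<and> x < pi / 2 \<and> sin_tan_mean p x < 1"
proof -
  have "4 * p * ln (2 / pi) < ln 3"
  proof -
    have "- p * (ln pi - ln 2) < crit_exp * (ln pi - ln 2)"
      using assms(1) ln_pi_half_pos by (intro mult_strict_right_mono) auto
    moreover have "crit_exp * (ln pi - ln 2) = ln 3 / 4"
      using crit_exp_mult_ln_pi_half by simp
    moreover have "4 * p * ln (2 / pi) = 4 * (- p * (ln pi - ln 2))"
      using pi_gt3 by (simp add: ln_div algebra_simps)
    ultimately show ?thesis
      by linarith
  qed
  then have "(1/3) * (2 / pi) powr (4 * p) < 1"
    using pi_gt3 exp_less_mono[of "4 * p * ln (2 / pi)" "ln 3"] by (simp add: powr_def)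
  from order_tendstoD(2)[OF sin_tan_mean_tendsto_pi_half[OF assms(2)] this]
  obtain b where "b < pi / 2" "\<And>y. b < y \<Longrightarrow> y < pi / 2 \<Longrightarrow> sin_tan_mean p y < 1"
    unfolding eventually_at_left_field by blast
  moreover define x where "x = (max b 0 + pi / 2) / 2"
  ultimately show ?thesis
    using pi_gt3 by (intro exI[of _ x]) (auto simp: x_def)
qed

lemma neg_ln_sin_div_ge:
  fixes x :: real assumes "0 < x" "x \<le> 1"
  shows "x^2 * (1/6 - x^2/120) \<le> - ln (sin x / x)"
proof -
  have "0 < sin x"
    using assms pi_gt3 by (intro sin_gt_zero) auto
  then have "ln (sin x / x) \<le> sin x / x - 1"
    using assms by (intro ln_le_minus_one) auto
  moreover have "sin x / x \<le> 1 - x^2/6 + x^4/120"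
    using sin_le_quintic[of x] assms pi_gt3 by (simp add: divide_le_eq field_simps eval_nat_numeral)
  ultimately show ?thesis
    by (simp add: algebra_simps eval_nat_numeral)
qed

lemma ln_sin_div_x_cos_ge:
  fixes x :: real assumes x: "0 < x" "x \<le> 1"
  shows "x^2 * (1/3 - x^2/24) \<le> ln (sin x / (x * cos x))"
proof -
  have "x < pi / 2"
    using x pi_gt3 by simp
  then have s: "0 < sin x" and c: "0 < cos x"
    using x sin_gt_zero2 cos_gt_zero by auto
  have "0 < 1 - x^2/6"
    using x power_le_one[of x 2] by simp
  have "x * (1 - x^2/6) \<le> sin x"
    using sin_ge_cubic[of x] x pi_gt3 by (simp add: algebra_simps power3_eq_cube power2_eq_square)
  then have "x * cos x / sin x \<le> x * (1 - x^2/2 + x^4/24) / (x * (1 - x^2/6))"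
    using cos_le_quartic[of x] x \<open>x < pi / 2\<close> s c \<open>0 < 1 - x^2/6\<close>
    by (intro frac_le mult_left_mono) auto
  also have "\<dots> = 1 - x^2 * (1/3 - x^2/24) / (1 - x^2/6)"
    using x \<open>0 < 1 - x^2/6\<close> by (simp add: field_simps power2_eq_square eval_nat_numeral)
  also have "\<dots> \<le> 1 - x^2 * (1/3 - x^2/24)"
  proof -
    have "0 \<le> x^2 * (1/3 - x^2/24)"
      using x power_le_one[of x 2] by simp
    then have "x^2 * (1/3 - x^2/24) * (1 - x^2/6) \<le> x^2 * (1/3 - x^2/24)"
      using x by (intro mult_left_le) auto
    then show ?thesis
      using \<open>0 < 1 - x^2/6\<close> by (simp add: le_divide_eq)
  qed
  finally have "x^2 * (1/3 - x^2/24) \<le> 1 - x * cos x / sin x"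
    by simp
  also have "\<dots> \<le> ln (sin x / (x * cos x))"
    using ln_le_minus_one[of "x * cos x / sin x"] x s c by (simp add: ln_div ln_mult)
  finally show ?thesis .
qed

lemma ln_sin_div_x_cos_le:
  fixes x :: real assumes x: "0 < x" "x \<le> 1"
  shows "ln (sin x / (x * cos x)) \<le> x^2"
proof -
  have "x < pi / 2"
    using x pi_gt3 by simp
  then have s: "0 < sin x" and c: "0 < cos x"
    using x sin_gt_zero2 cos_gt_zero by auto
  have "ln (sin x / (x * cos x)) \<le> sin x / (x * cos x) - 1"
    using x s c by (intro ln_le_minus_one) auto
  also have "\<dots> \<le> 1 / cos x - 1"
    using sin_x_le_x[of x] x c by (simp add: divide_simps algebra_simps)
  also have "\<dots> \<le> x^2"
  proof -
    have "(1 + x^2) * (1 - x^2/2) \<le> (1 + x^2) * cos x"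
      using cos_ge_quadratic[of x] x \<open>x < pi / 2\<close> by (intro mult_left_mono) auto
    moreover have "1 \<le> (1 + x^2) * (1 - x^2/2)"
      using x power_le_one[of x 2] by (simp add: algebra_simps power2_eq_square mult_le_cancel_left1)
    ultimately have "1 \<le> (1 + x^2) * cos x"
      by linarith
    then show ?thesis
      using c by (simp add: divide_le_eq algebra_simps)
  qed
  finally show ?thesis .
qed

definition taylor_excess :: "real \<Rightarrow> real" where
  "taylor_excess y = 1/15 - 5*y/432 + 13*y^2/14400 - y^3/28800 + y^4/1728000"

lemma taylor_excess_eq: "(1 - y/6 + y^2/120)^3 - ipoly cos6 y / 720 = y^2 * taylor_excess y"
  by (simp add: cos6_def taylor_excess_def field_simps eval_nat_numeral)

lemma ln_sin_cube_div_le: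
  fixes x :: real assumes x: "0 < x" "x \<le> 1"
  shows "ln (sin x ^ 3 / (x^3 * cos x)) \<le> 720 * x^4 * taylor_excess (x^2) / ipoly cos6 (x^2)"
proof -
  define C where "C = ipoly cos6 (x^2) / 720"
  have "x < pi / 2"
    using x pi_gt3 by simp
  then have s: "0 < sin x" and c: "0 < cos x"
    using x sin_gt_zero2 cos_gt_zero by auto
  have "0 < C"
    using cos6_pos[of "x^2"] x power_le_one[of x 2] by (simp add: C_def)
  have sin_le: "sin x \<le> x * (1 - x^2/6 + x^4/120)"
    using sin_le_quintic[of x] x pi_gt3 by (simp add: algebra_simps eval_nat_numeral)
  then have "sin x ^ 3 \<le> (x * (1 - x^2/6 + x^4/120)) ^ 3"
    using s by (intro power_mono) auto
  moreover have "x^3 * C \<le> x^3 * cos x"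
    using cos_ge_cos6[of x] x \<open>x < pi / 2\<close> by (intro mult_left_mono) (auto simp: C_def)
  ultimately have "sin x ^ 3 / (x^3 * cos x) \<le> (x * (1 - x^2/6 + x^4/120)) ^ 3 / (x^3 * C)"
    using s x \<open>0 < C\<close> sin_le by (intro frac_le) auto
  also have "\<dots> = (1 - x^2/6 + x^4/120) ^ 3 / C"
    using x by (simp add: power_mult_distrib)
  also have "\<dots> = 1 + x^4 * taylor_excess (x^2) / C"
  proof -
    have "(1 - x^2/6 + x^4/120) ^ 3 = C + x^4 * taylor_excess (x^2)"
      using taylor_excess_eq[of "x^2"] by (simp add: C_def flip: power_mult)
    then show ?thesis
      using \<open>0 < C\<close> by (simp add: field_simps)
  qed
  finally have "ln (sin x ^ 3 / (x^3 * cos x)) \<le> x^4 * taylor_excess (x^2) / C"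
    using ln_le_minus_one[of "sin x ^ 3 / (x^3 * cos x)"] s c x by simp
  then show ?thesis
    by (simp add: C_def ac_simps)
qed

lemma sin_tan_mean_neg_ge_exp_taylor:
  fixes x q :: real assumes x: "0 < x" "x < pi / 2" and "0 \<le> q"
  defines "\<alpha> \<equiv> - ln (sin x / x)" and "\<beta> \<equiv> ln (sin x / (x * cos x))"
  shows "1 + (q/3) * (4 * \<alpha> - 2 * \<beta>) + (q^2/3) * (8 * \<alpha>^2 + \<beta>^2) - q^3 * \<beta>^3 / 9
    \<le> sin_tan_mean (- q) x"
proof -
  have s: "0 < sin x" and c: "0 < cos x"
    using x sin_gt_zero2 cos_gt_zero by auto
  have "0 \<le> \<alpha>"
    using sin_x_le_x[of x] x s by (simp add: \<alpha>_def)
  have "0 \<le> \<beta>"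
    using x_cos_less_sin[OF x] x c by (simp add: \<beta>_def)
  have "(sin x / x) powr (4 * (- q)) = exp (4 * q * \<alpha>)"
    using s x by (simp add: powr_def \<alpha>_def)
  moreover have "(tan x / x) powr (- q) = exp (- (q * \<beta>))"
    using s c x by (simp add: powr_def \<beta>_def tan_def field_simps)
  moreover have "1 + 4 * q * \<alpha> + (4 * q * \<alpha>)^2 / 2 \<le> exp (4 * q * \<alpha>)"
    using \<open>0 \<le> \<alpha>\<close> assms(3) by (intro exp_lower_Taylor_quadratic) auto
  moreover have "1 - q * \<beta> + (q * \<beta>)^2 / 2 - (q * \<beta>)^3 / 6 \<le> exp (- (q * \<beta>))"
    using \<open>0 \<le> \<beta>\<close> assms(3) by (intro exp_minus_lower_cubic) auto
  ultimately show ?thesis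
    unfolding sin_tan_mean_def by (simp add: power_mult_distrib field_simps)
qed

text \<open>\<open>sin_tan_mean (-q) x - 1\<close> is at least \<open>q x\<^sup>4 / 3\<close> times \<open>small_x_margin q (x\<^sup>2)\<close>, whose
  value at \<open>0\<close> is \<open>q/3 - 2/15\<close>.\<close>

definition small_x_margin :: "real \<Rightarrow> real \<Rightarrow> real" where
  "small_x_margin q y = q * (8 * (1/6 - y/120)^2 + (1/3 - y/24)^2)
    - 1440 * taylor_excess y / ipoly cos6 y - q^2 * y / 3"

lemma one_less_sin_tan_mean_neg_of_margin:
  fixes x q :: real assumes x: "0 < x" "x \<le> 1" and "0 < q" and margin: "0 < small_x_margin q (x^2)"
  shows "1 < sin_tan_mean (- q) x"
proof -
  define y where "y = x^2"
  define \<alpha> where "\<alpha> = - ln (sin x / x)"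
  define \<beta> where "\<beta> = ln (sin x / (x * cos x))"
  have "x < pi / 2"
    using x pi_gt3 by simp
  then have s: "0 < sin x" and c: "0 < cos x"
    using x sin_gt_zero2 cos_gt_zero by auto
  have "0 < y" "y \<le> 1"
    using x by (auto simp: y_def power_le_one)
  have "4 * \<alpha> - 2 * \<beta> = - 2 * ln (sin x ^ 3 / (x^3 * cos x))"
    using s c x by (simp add: \<alpha>_def \<beta>_def ln_div ln_mult ln_realpow algebra_simps)
  also have "\<dots> \<ge> - 2 * (720 * y^2 * taylor_excess y / ipoly cos6 y)"
    using ln_sin_cube_div_le[OF x] by (simp add: y_def flip: power_mult)
  finally have lin: "- 2 * (720 * y^2 * taylor_excess y / ipoly cos6 y) \<le> 4 * \<alpha> - 2 * \<beta>" .
  have "y * (1/6 - y/120) \<le> \<alpha>" "y * (1/3 - y/24) \<le> \<beta>" "\<beta> \<le> y"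
    using neg_ln_sin_div_ge[OF x] ln_sin_div_x_cos_ge[OF x] ln_sin_div_x_cos_le[OF x]
    by (simp_all add: y_def \<alpha>_def \<beta>_def)
  moreover have "0 \<le> y * (1/6 - y/120)" "0 \<le> y * (1/3 - y/24)"
    using \<open>0 < y\<close> \<open>y \<le> 1\<close> by auto
  ultimately have quad: "(y * (1/6 - y/120))^2 \<le> \<alpha>^2" "(y * (1/3 - y/24))^2 \<le> \<beta>^2" "\<beta>^3 \<le> y^3"
    by (auto intro: power_mono)
  have "1 < 1 + (q/3) * y^2 * small_x_margin q y"
    using \<open>0 < q\<close> \<open>0 < y\<close> margin by (simp add: y_def)
  also have "\<dots> = 1 + (q/3) * (- 2 * (720 * y^2 * taylor_excess y / ipoly cos6 y))
      + (q^2/3) * (8 * (y * (1/6 - y/120))^2 + (y * (1/3 - y/24))^2) - q^3 * y^3 / 9"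
    by (simp add: small_x_margin_def field_simps power2_eq_square power3_eq_cube)
  also have "\<dots> \<le> 1 + (q/3) * (4 * \<alpha> - 2 * \<beta>) + (q^2/3) * (8 * \<alpha>^2 + \<beta>^2) - q^3 * \<beta>^3 / 9"
    using lin quad \<open>0 < q\<close> by (intro add_mono diff_mono mult_left_mono divide_right_mono) auto
  also have "\<dots> \<le> sin_tan_mean (- q) x"
    using sin_tan_mean_neg_ge_exp_taylor[OF x(1) \<open>x < pi / 2\<close>] \<open>0 < q\<close> by (simp add: \<alpha>_def \<beta>_def)
  finally show ?thesis .
qed

lemma one_less_sin_tan_mean_near_zero:
  fixes p :: real assumes "p < - (2/5)"
  shows "\<exists>x. 0 < x \<and> x < pi / 2 \<and> 1 < sin_tan_mean p x"
proof -
  have cos6: "ipoly cos6 y = 720 - 360 * y + 30 * y^2 - y^3" for y :: real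
    by (simp add: cos6_def algebra_simps power2_eq_square power3_eq_cube)
  have "((\<lambda>x. small_x_margin (- p) (x^2)) \<longlongrightarrow> small_x_margin (- p) (0^2)) (at_right 0)"
    unfolding small_x_margin_def taylor_excess_def cos6 by (intro tendsto_intros) auto
  moreover have "small_x_margin (- p) (0^2) = - p / 3 - 2/15"
    by (simp add: small_x_margin_def taylor_excess_def cos6_def power2_eq_square)
  ultimately have "\<forall>\<^sub>F x in at_right 0. 0 < small_x_margin (- p) (x^2)"
    using assms by (intro order_tendstoD(1)) auto
  then obtain b where "0 < b" and b: "\<And>x. 0 < x \<Longrightarrow> x < b \<Longrightarrow> 0 < small_x_margin (- p) (x^2)"
    unfolding eventually_at_right_field by auto
  define x where "x = min (b / 2) 1"
  have "0 < x" "x \<le> 1" "x < b"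
    using \<open>0 < b\<close> by (auto simp: x_def)
  then have "1 < sin_tan_mean (- (- p)) x"
    using assms b by (intro one_less_sin_tan_mean_neg_of_margin) auto
  moreover have "x < pi / 2"
    using \<open>x \<le> 1\<close> pi_gt3 by simp
  ultimately show ?thesis
    using \<open>0 < x\<close> by auto
qed

lemma one_less_sin_tan_mean_iff:
  fixes p :: real assumes "p \<noteq> 0"
  shows "(\<forall>x. 0 < x \<and> x < pi / 2 \<longrightarrow> 1 < sin_tan_mean p x) \<longleftrightarrow> 0 < p \<or> p \<le> - crit_exp"
proof
  assume all: "\<forall>x. 0 < x \<and> x < pi / 2 \<longrightarrow> 1 < sin_tan_mean p x"
  show "0 < p \<or> p \<le> - crit_exp"
  proof (rule ccontr)
    assume "\<not> (0 < p \<or> p \<le> - crit_exp)"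
    then obtain x where "0 < x" "x < pi / 2" "sin_tan_mean p x < 1"
      using sin_tan_mean_less_one_near_pi_half assms by (metis linorder_not_le linorder_neqE_linordered_idom)
    with all show False by auto
  qed
next
  assume "0 < p \<or> p \<le> - crit_exp"
  then show "\<forall>x. 0 < x \<and> x < pi / 2 \<longrightarrow> 1 < sin_tan_mean p x"
    using one_less_sin_tan_mean_pos one_less_sin_tan_mean_of_le_neg_crit_exp by blast
qed

lemma sin_tan_mean_less_one_iff:
  fixes p :: real assumes "p \<noteq> 0"
  shows "(\<forall>x. 0 < x \<and> x < pi / 2 \<longrightarrow> sin_tan_mean p x < 1) \<longleftrightarrow> -2/5 \<le> p \<and> p < 0"
proof
  assume all: "\<forall>x. 0 < x \<and> x < pi / 2 \<longrightarrow> sin_tan_mean p x < 1"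
  have "\<not> 0 < p"
  proof
    assume "0 < p"
    have "1 < pi / 2"
      using pi_gt3 by simp
    then have "sin_tan_mean p 1 < 1"
      using all by simp
    with one_less_sin_tan_mean_pos[of 1 p] \<open>1 < pi / 2\<close> \<open>0 < p\<close> show False
      by simp
  qed
  moreover have "\<not> p < -2/5"
  proof
    assume "p < -2/5"
    then obtain x where "0 < x" "x < pi / 2" "1 < sin_tan_mean p x"
      using one_less_sin_tan_mean_near_zero by auto
    with all show False
      by auto
  qed
  ultimately show "-2/5 \<le> p \<and> p < 0"
    using assms by simp
next
  assume "-2/5 \<le> p \<and> p < 0"
  then show "\<forall>x. 0 < x \<and> x < pi / 2 \<longrightarrow> sin_tan_mean p x < 1"
    using sin_tan_mean_less_one_of_neg_2_5_le by blast
qed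

theorem proposition4p12:
  fixes p :: real
  assumes "p \<noteq> 0"
  shows "((\<forall>x::real. 0 < x \<and> x < pi / 2 \<longrightarrow>
             (1/3) * (sin x / x) powr (4 * p) + (2/3) * (tan x / x) powr p > 1)
          \<longleftrightarrow> (p > 0 \<or> p \<le> - (ln 3 / (4 * (ln pi - ln 2)))))
       \<and> ((\<forall>x::real. 0 < x \<and> x < pi / 2 \<longrightarrow>
             (1/3) * (sin x / x) powr (4 * p) + (2/3) * (tan x / x) powr p < 1)
          \<longleftrightarrow> (-2/5 \<le> p \<and> p < 0))"
  using one_less_sin_tan_mean_iff[OF assms] sin_tan_mean_less_one_iff[OF assms]
  unfolding sin_tan_mean_def crit_exp_def by simp

end
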